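(* Let $\mu$ be a Borel measure on $\mathbb{R}$ with finite moments, $x_0\in\mathbb{R}$, $0<\alpha<1$, and $g(x)=(x-{\rm i})^{-1}$. Then for every $f\in\mathcal{L}_w$ and every $n\in\mathbb{N}$, $$\operatorname{Var}X^{(n)}_{f,\alpha,x_0}\le\|f\|^2_{\mathcal{L}_w}\operatorname{Var}X^{(n)}_{g,\alpha,x_0}.$$
   Context: $\mathcal{L}_w$ is the space of functions $f:\mathbb{R}\to\mathbb{R}$ with $\lim_{x\to-\infty}f(x)=0$ and $\|f\|_{\mathcal{L}_w}:=\sup_{x\ne y}\sqrt{1+x^2}\sqrt{1+y^2}\left|\frac{f(x)-f(y)}{x-y}\right|<\infty$. The OPE of size $n$ is the probability measure on $\mathbb{R}^n$ proportional to $\prod_{i<j}(x_i-x_j)^2\,{\rm d}\mu(x_1)\cdots{\rm d}\mu(x_n)$, and $X^{(n)}_{h,\alpha,x_0}=\sum_{j=1}^nh(n^\alpha(x_j-x_0))$. For complex-valued $h$, $\operatorname{Var}X=\mathbb{E}|X-\mathbb{E}X|^2$. *)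

theory Defs
  imports "HOL-Probability.Probability"
begin

text \<open>Points of R^n are functions nat => real, restricted to the index set {..<n}.\<close>

definition ope_weight :: "nat \<Rightarrow> (nat \<Rightarrow> real) \<Rightarrow> real" where
  "ope_weight n x = (\<Prod>(i,j)\<in>{(i,j). i < j \<and> j < n}. (x i - x j)^2)"

definition ope_base :: "real measure \<Rightarrow> nat \<Rightarrow> (nat \<Rightarrow> real) measure" where
  "ope_base \<mu> n = PiM {..<n} (\<lambda>_. \<mu>)"

definition ope_partition :: "real measure \<Rightarrow> nat \<Rightarrow> real" where
  "ope_partition \<mu> n = (\<integral>x. ope_weight n x \<partial>ope_base \<mu> n)"

definition OPE :: "real measure \<Rightarrow> nat \<Rightarrow> (nat \<Rightarrow> real) measure" where
  "OPE \<mu> n = density (ope_base \<mu> n)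
      (\<lambda>x. ennreal (ope_weight n x / ope_partition \<mu> n))"

definition lin_stat :: "(real \<Rightarrow> complex) \<Rightarrow> real \<Rightarrow> real \<Rightarrow> nat \<Rightarrow> (nat \<Rightarrow> real) \<Rightarrow> complex" where
  "lin_stat h \<alpha> x0 n x = (\<Sum>j<n. h (real n powr \<alpha> * (x j - x0)))"

definition cvariance :: "'a measure \<Rightarrow> ('a \<Rightarrow> complex) \<Rightarrow> real" where
  "cvariance M X = (\<integral>x. (cmod (X x - (\<integral>y. X y \<partial>M)))^2 \<partial>M)"

definition Lw_quot_set :: "(real \<Rightarrow> real) \<Rightarrow> real set" where
  "Lw_quot_set f = {sqrt (1 + x^2) * sqrt (1 + y^2) * \<bar>(f x - f y) / (x - y)\<bar> | x y. x \<noteq> y}"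

definition Lw_norm :: "(real \<Rightarrow> real) \<Rightarrow> real" where
  "Lw_norm f = Sup (Lw_quot_set f)"

definition Lw :: "(real \<Rightarrow> real) set" where
  "Lw = {f. (f \<longlongrightarrow> 0) at_bot \<and> bdd_above (Lw_quot_set f)}"

definition finite_moments :: "real measure \<Rightarrow> bool" where
  "finite_moments \<mu> \<longleftrightarrow> (\<forall>k::nat. integrable \<mu> (\<lambda>x. x ^ k))"

end

theory Submission
  imports Defs "Jordan_Normal_Form.Determinant" "HOL-Computational_Algebra.Polynomial"
begin

text \<open>The OPE is the determinantal point process of the Christoffel--Darboux kernel
  K(s, t) = \<Sum>k<n. \<psi>_k(s) \<psi>_k(t) of the orthonormal polynomials \<psi>_k of \<mu>: the squared
  Vandermonde is det[\<psi>_k(x_j)]^2 up to a constant, and integrating its Leibniz expansion term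
  by term gives, for every bounded h,
    Var \<Sum>j<n. h(x_j) = 1/2 \<integral>\<integral> |h(s) - h(t)|^2 K(s, t)^2 d\<mu>(s) d\<mu>(t).
  The variance is therefore monotone under pointwise domination of increments. For
  g(x) = 1/(x - \<i>) one has |g(x) - g(y)| = |x - y| / (\<surd>(1 + x^2) \<surd>(1 + y^2)), so the
  \<open>Lw\<close>-norm is exactly the best constant in |f(x) - f(y)| \<le> \<parallel>f\<parallel> |g(x) - g(y)|.\<close>

section \<open>The squared Vandermonde determinant\<close>

lemma det_mat_scale_rows:
  fixes c :: "nat \<Rightarrow> 'a::comm_ring_1"
  shows "det (mat n n (\<lambda>(j,k). c j * a j k)) = (\<Prod>j<n. c j) * det (mat n n (\<lambda>(j,k). a j k))"
proof -
  have "det (mat n n (\<lambda>(j,k). c j * a j k)) =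
     (\<Sum>p | p permutes {0..<n}. (\<Prod>j<n. c j) * (of_int (sign p) * (\<Prod>i = 0..<n. a i (p i))))"
    unfolding det_def
    by (auto intro!: sum.cong simp: permutes_in_image prod.distrib atLeast0LessThan mult_ac)
  also have "\<dots> = (\<Prod>j<n. c j) * det (mat n n (\<lambda>(j,k). a j k))"
    unfolding det_def sum_distrib_left[symmetric]
    by (auto intro!: sum.cong prod.cong arg_cong[where f="\<lambda>x. _ * x"] simp: permutes_in_image)
  finally show ?thesis .
qed

lemma det_vandermonde_Suc:
  fixes x :: "nat \<Rightarrow> 'a::comm_ring_1"
  shows "det (mat (Suc n) (Suc n) (\<lambda>(j,k). x j ^ k))
       = (\<Prod>j<n. x (Suc j) - x 0) * det (mat n n (\<lambda>(j,k). x (Suc j) ^ k))"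
proof -
  define V where "V = mat (Suc n) (Suc n) (\<lambda>(j,k). x j ^ k)"
  \<comment> \<open>subtracting x 0 times column k - 1 from column k clears the first row except for its 1\<close>
  define E where "E = mat (Suc n) (Suc n) (\<lambda>(i,k). if i = k then 1 else if k = Suc i then - x 0 else (0::'a))"
  define B where "B = mat (Suc n) (Suc n) (\<lambda>(j,k). if k = 0 then 1 else x j ^ k - x 0 * x j ^ (k - 1))"
  have V: "V \<in> carrier_mat (Suc n) (Suc n)" and E: "E \<in> carrier_mat (Suc n) (Suc n)"
    and B: "B \<in> carrier_mat (Suc n) (Suc n)" unfolding V_def E_def B_def by auto
  have "upper_triangular E" unfolding E_def upper_triangular_def by auto
  moreover have "diag_mat E = map (\<lambda>_. 1) [0..<Suc n]"
    unfolding diag_mat_def E_def by auto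
  ultimately have det_E: "det E = 1"
    using det_upper_triangular[OF _ E] by (simp add: map_replicate_const)
  have VE: "V * E = B"
  proof (rule eq_matI)
    fix j k assume j: "j < dim_row B" and k: "k < dim_col B"
    have "(V * E) $$ (j, k) = (\<Sum>i<Suc n. x j ^ i * (if i = k then 1 else if k = Suc i then - x 0 else 0))"
      using j k unfolding V_def E_def B_def
      by (auto simp: scalar_prod_def atLeast0LessThan intro!: sum.cong)
    also have "\<dots> = (\<Sum>i<Suc n. if i = k then x j ^ i else 0) + (\<Sum>i<Suc n. if Suc i = k then - x 0 * x j ^ i else 0)"
      by (subst sum.distrib[symmetric]) (auto intro!: sum.cong)
    also have "\<dots> = B $$ (j, k)"
      using j k by (cases k) (auto simp: sum.delta B_def)
    finally show "(V * E) $$ (j, k) = B $$ (j, k)" .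
  qed (auto simp: V_def E_def B_def)
  have minor: "mat_delete B 0 0 = mat n n (\<lambda>(j,k). (x (Suc j) - x 0) * x (Suc j) ^ k)"
  proof (rule eq_matI)
    fix j k assume "j < dim_row (mat n n (\<lambda>(j,k). (x (Suc j) - x 0) * x (Suc j) ^ k))"
      and "k < dim_col (mat n n (\<lambda>(j,k). (x (Suc j) - x 0) * x (Suc j) ^ k))"
    then show "mat_delete B 0 0 $$ (j, k) = mat n n (\<lambda>(j,k). (x (Suc j) - x 0) * x (Suc j) ^ k) $$ (j, k)"
      using mat_delete_index[OF B, of 0 0 j k] by (simp add: B_def algebra_simps)
  qed (auto simp: B_def)
  have "det V = det B"
    using det_mult[OF V E] det_E VE by simp
  also have "\<dots> = (\<Sum>k<Suc n. B $$ (0, k) * cofactor B 0 k)"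
    by (rule laplace_expansion_row[OF B]) simp
  also have "\<dots> = det (mat_delete B 0 0)"
    by (subst sum.remove[of _ 0]) (auto simp: B_def cofactor_def power_eq_if intro!: sum.neutral)
  finally show ?thesis unfolding V_def minor det_mat_scale_rows .
qed

lemma det_vandermonde:
  fixes x :: "nat \<Rightarrow> 'a::comm_ring_1"
  shows "det (mat n n (\<lambda>(j,k). x j ^ k)) = (\<Prod>j<n. \<Prod>i<j. x j - x i)"
proof (induction n arbitrary: x)
  case 0
  show ?case by (simp add: det_dim_zero)
next
  case (Suc n)
  have "(\<Prod>j<n. x (Suc j) - x 0) * (\<Prod>j<n. \<Prod>i<j. x (Suc j) - x (Suc i)) = (\<Prod>j<Suc n. \<Prod>i<j. x j - x i)"
    by (simp only: prod.lessThan_Suc_shift) (simp add: prod.distrib del: prod.lessThan_Suc)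
  then show ?case unfolding det_vandermonde_Suc Suc.IH .
qed

lemma det_mat_Leibniz:
  "det (mat n n (\<lambda>(j,i). a j i)) = (\<Sum>p | p permutes {..<n}. of_int (sign p) * (\<Prod>j<n. a j (p j)))"
  unfolding det_def by (auto intro!: sum.cong prod.cong simp: permutes_in_image atLeast0LessThan)

definition poly_det :: "(nat \<Rightarrow> 'a::comm_ring_1 poly) \<Rightarrow> nat \<Rightarrow> (nat \<Rightarrow> 'a) \<Rightarrow> 'a" where
  "poly_det \<psi> n x = (\<Sum>p | p permutes {..<n}. of_int (sign p) * (\<Prod>j<n. poly (\<psi> (p j)) (x j)))"

lemma poly_det_cong: "(\<And>i. i < n \<Longrightarrow> \<phi> i = \<psi> i) \<Longrightarrow> poly_det \<phi> n x = poly_det \<psi> n x"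
  unfolding poly_det_def
  by (intro sum.cong refl arg_cong[where f="\<lambda>y. _ * y"] prod.cong)
    (metis lessThan_iff mem_Collect_eq permutes_in_image)

lemma poly_det_smult:
  "poly_det (\<lambda>i. Polynomial.smult (c i) (\<psi> i)) n x = (\<Prod>i<n. c i) * poly_det \<psi> n x"
  unfolding poly_det_def sum_distrib_left
proof (rule sum.cong[OF refl])
  fix p assume "p \<in> {p. p permutes {..<n}}"
  then have "(\<Prod>j<n. c (p j)) = (\<Prod>i<n. c i)"
    using prod.permute[of p "{..<n}" c] by (simp add: comp_def)
  then show "of_int (sign p) * (\<Prod>j<n. poly (Polynomial.smult (c (p j)) (\<psi> (p j))) (x j))
      = (\<Prod>i<n. c i) * (of_int (sign p) * (\<Prod>j<n. poly (\<psi> (p j)) (x j)))"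
    by (simp add: prod.distrib)
qed

lemma poly_det_sq_mult_prod:
  "(poly_det \<psi> n x)^2 * (\<Prod>j<n. w j (x j)) =
   (\<Sum>p | p permutes {..<n}. \<Sum>q | q permutes {..<n}. of_int (sign p * sign q) *
      (\<Prod>j<n. poly (\<psi> (p j)) (x j) * poly (\<psi> (q j)) (x j) * w j (x j)))"
  unfolding poly_det_def power2_eq_square sum_product sum_distrib_right
  by (intro sum.cong refl) (simp add: prod.distrib sum_distrib_left mult_ac)

text \<open>The change of basis from the monomials to monic polynomials of increasing degrees is
  unitriangular.\<close>
lemma poly_det_monic_eq_vandermonde:
  fixes \<phi> :: "nat \<Rightarrow> 'a::comm_ring_1 poly"
  assumes deg: "\<And>i. i < n \<Longrightarrow> degree (\<phi> i) \<le> i" and lc: "\<And>i. i < n \<Longrightarrow> coeff (\<phi> i) i = 1"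
  shows "poly_det \<phi> n x = (\<Prod>j<n. \<Prod>i<j. x j - x i)"
proof -
  define V where "V = mat n n (\<lambda>(j,k). x j ^ k)"
  define U where "U = mat n n (\<lambda>(k,i). coeff (\<phi> i) k)"
  have V: "V \<in> carrier_mat n n" and U: "U \<in> carrier_mat n n" unfolding V_def U_def by auto
  have "upper_triangular U" unfolding U_def upper_triangular_def
    by (auto intro!: coeff_eq_0) (meson deg le_less_trans less_trans)
  moreover have "diag_mat U = map (\<lambda>_. 1) [0..<n]"
    unfolding diag_mat_def U_def using lc by auto
  ultimately have det_U: "det U = 1"
    using det_upper_triangular[OF _ U] by (simp add: map_replicate_const)
  have VU: "V * U = mat n n (\<lambda>(j,i). poly (\<phi> i) (x j))"
  proof (rule eq_matI)
    fix j i assume j: "j < dim_row (mat n n (\<lambda>(j,i). poly (\<phi> i) (x j)))"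
      and i: "i < dim_col (mat n n (\<lambda>(j,i). poly (\<phi> i) (x j)))"
    have "(V * U) $$ (j, i) = (\<Sum>k<n. coeff (\<phi> i) k * x j ^ k)"
      using j i unfolding V_def U_def
      by (auto simp: scalar_prod_def atLeast0LessThan mult.commute intro!: sum.cong)
    also have "\<dots> = (\<Sum>k\<le>degree (\<phi> i). coeff (\<phi> i) k * x j ^ k)"
      using deg[of i] i by (intro sum.mono_neutral_right) (auto simp: coeff_eq_0)
    also have "\<dots> = poly (\<phi> i) (x j)" by (simp add: poly_altdef)
    finally show "(V * U) $$ (j, i) = mat n n (\<lambda>(j,i). poly (\<phi> i) (x j)) $$ (j, i)"
      using i j by simp
  qed (auto simp: V_def U_def)
  have "poly_det \<phi> n x = det (V * U)"
    unfolding VU det_mat_Leibniz poly_det_def ..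
  also have "\<dots> = det V" using det_mult[OF V U] det_U by simp
  finally show ?thesis unfolding V_def det_vandermonde .
qed

lemma prod_pairs_less:
  "(\<Prod>(i,j)\<in>{(i,j). i < j \<and> j < n}. g i j) = (\<Prod>j<n::nat. \<Prod>i<j. g i j)"
proof -
  have "{(i,j). i < j \<and> j < n} = (\<lambda>(j,i). (i,j)) ` (SIGMA j:{..<n}. {..<j})" by auto
  moreover have "inj_on (\<lambda>(j,i). (i::nat,j::nat)) (SIGMA j:{..<n}. {..<j})" by (auto simp: inj_on_def)
  ultimately show ?thesis by (simp add: prod.reindex prod.Sigma case_prod_beta')
qed

lemma ope_weight_eq_poly_det_sq:
  fixes \<phi> :: "nat \<Rightarrow> real poly"
  assumes "\<And>i. i < n \<Longrightarrow> degree (\<phi> i) \<le> i" and "\<And>i. i < n \<Longrightarrow> coeff (\<phi> i) i = 1"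
  shows "ope_weight n x = (poly_det \<phi> n x)^2"
proof -
  have "ope_weight n x = (\<Prod>j<n. \<Prod>i<j. (x i - x j)^2)"
    unfolding ope_weight_def by (rule prod_pairs_less)
  also have "\<dots> = (\<Prod>j<n. \<Prod>i<j. x j - x i)^2"
    by (simp add: prod_power_distrib power2_commute)
  finally show ?thesis using poly_det_monic_eq_vandermonde[OF assms] by simp
qed

section \<open>Sums over pairs of permutations\<close>

lemma permutes_lessThan_less: "p permutes {..<n} \<Longrightarrow> j < n \<Longrightarrow> p j < n"
  using permutes_in_image by fastforce

lemma permutes_agree_outside:
  assumes p: "p permutes S" and q: "q permutes S" and eq: "\<And>j. j \<in> S - A \<Longrightarrow> q j = p j"
  shows "inv_into UNIV p \<circ> q permutes A"
  using permutes_compose[OF q permutes_inv[OF p]]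
  by (rule permutes_superset) (simp add: eq permutes_inverses(2)[OF p])

lemma permutes_comp_inv_cancel: "p permutes S \<Longrightarrow> p \<circ> (inv_into UNIV p \<circ> q) = q"
  by (simp add: o_assoc permutes_inv_o(1))

text \<open>An index a \<ge> n means that there is no exceptional index.\<close>
lemma sum_signed_permutes_diagonal:
  fixes c :: "nat \<Rightarrow> nat \<Rightarrow> nat \<Rightarrow> 'a::comm_ring_1"
  assumes p: "p permutes {..<n}"
    and offdiag: "\<And>j u v. j < n \<Longrightarrow> j \<noteq> a \<Longrightarrow> u < n \<Longrightarrow> v < n \<Longrightarrow> u \<noteq> v \<Longrightarrow> c j u v = 0"
  shows "(\<Sum>q | q permutes {..<n}. of_int (sign p * sign q) * (\<Prod>j<n. c j (p j) (q j)))
       = (\<Prod>j<n. c j (p j) (p j))"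
proof -
  have vanish: "(\<Prod>j<n. c j (p j) (q j)) = 0" if q: "q permutes {..<n}" "q \<noteq> p" for q
  proof -
    obtain j where "j \<in> {..<n} - {a}" "q j \<noteq> p j"
      using permutes_agree_outside[OF p q(1), of "{a}"] permutes_comp_inv_cancel[OF p, of q] q(2)
      by fastforce
    then show ?thesis
      using offdiag permutes_lessThan_less[OF p] permutes_lessThan_less[OF q(1)]
      by (intro prod_zero bexI[of _ j]) auto
  qed
  have "(\<Sum>q | q permutes {..<n}. of_int (sign p * sign q) * (\<Prod>j<n. c j (p j) (q j)))
     = of_int (sign p * sign p) * (\<Prod>j<n. c j (p j) (p j))"
    using p by (subst sum.remove[of _ p]) (auto simp: vanish finite_permutations intro!: sum.neutral)
  then show ?thesis by (simp add: sign_idempotent)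
qed

text \<open>With two exceptional indices a, b only q = p and q = p \<circ> (a b) survive.\<close>
lemma sum_signed_permutes_two_points:
  fixes c :: "nat \<Rightarrow> nat \<Rightarrow> nat \<Rightarrow> 'a::comm_ring_1"
  assumes p: "p permutes {..<n}" and ab: "a < n" "b < n" "a \<noteq> b"
    and offdiag: "\<And>j u v. j < n \<Longrightarrow> j \<noteq> a \<Longrightarrow> j \<noteq> b \<Longrightarrow> u < n \<Longrightarrow> v < n \<Longrightarrow> u \<noteq> v \<Longrightarrow> c j u v = 0"
  shows "(\<Sum>q | q permutes {..<n}. of_int (sign p * sign q) * (\<Prod>j<n. c j (p j) (q j))) =
     (\<Prod>j<n. c j (p j) (p j)) - (\<Prod>j<n. c j (p j) (p (Transposition.transpose a b j)))"
proof -
  define r where "r = p \<circ> Transposition.transpose a b"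
  have r: "r permutes {..<n}"
    unfolding r_def using ab by (intro permutes_compose[OF _ p] permutes_swap_id) auto
  have "r a \<noteq> p a" using permutes_inj[OF p] ab by (auto simp: r_def dest: injD)
  then have rp: "r \<noteq> p" by auto
  have sign_r: "sign r = - sign p"
  proof -
    have "permutation p" using p by (auto simp: permutation_permutes)
    then show ?thesis using ab by (simp add: r_def sign_compose permutation_swap_id sign_swap_id)
  qed
  define g where "g q = of_int (sign p * sign q) * (\<Prod>j<n. c j (p j) (q j))" for q
  have vanish: "g q = 0" if q: "q permutes {..<n}" "q \<noteq> p" "q \<noteq> r" for q
  proof -
    have "inv_into UNIV p \<circ> q \<noteq> id" "inv_into UNIV p \<circ> q \<noteq> Transposition.transpose a b"
      using permutes_comp_inv_cancel[OF p, of q] q(2,3) by (auto simp: r_def)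
    then obtain j where "j \<in> {..<n} - {a, b}" "q j \<noteq> p j"
      using permutes_agree_outside[OF p q(1), of "{a, b}"] by (auto simp: permutes_doubleton_iff)
    then have "(\<Prod>j<n. c j (p j) (q j)) = 0"
      using offdiag permutes_lessThan_less[OF p] permutes_lessThan_less[OF q(1)]
      by (intro prod_zero bexI[of _ j]) auto
    then show ?thesis by (simp add: g_def)
  qed
  have "(\<Sum>q | q permutes {..<n}. g q) = (\<Sum>q\<in>{p, r}. g q)"
    using p r vanish by (intro sum.mono_neutral_right) (auto simp: finite_permutations)
  also have "\<dots> = g p + g r" using rp by simp
  also have "\<dots> = (\<Prod>j<n. c j (p j) (p j)) - (\<Prod>j<n. c j (p j) (p (Transposition.transpose a b j)))"
    unfolding g_def sign_r by (simp add: r_def sign_idempotent)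
  finally show ?thesis unfolding g_def .
qed

lemma prod_lessThan_point:
  fixes f :: "nat \<Rightarrow> 'a::comm_monoid_mult"
  assumes "a < n" "\<And>j. j < n \<Longrightarrow> j \<noteq> a \<Longrightarrow> f j = 1"
  shows "(\<Prod>j<n. f j) = f a"
  using assms by (subst prod.remove[of _ a]) (auto intro!: prod.neutral)

lemma prod_lessThan_two_points:
  fixes f :: "nat \<Rightarrow> 'a::comm_monoid_mult"
  assumes "a < n" "b < n" "a \<noteq> b" "\<And>j. j < n \<Longrightarrow> j \<noteq> a \<Longrightarrow> j \<noteq> b \<Longrightarrow> f j = 1"
  shows "(\<Prod>j<n. f j) = f a * f b"
proof -
  have "(\<Prod>j<n. f j) = f a * (f b * (\<Prod>j\<in>{..<n} - {a} - {b}. f j))"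
    using assms by (simp add: prod.remove[of "{..<n}" a] prod.remove[of "{..<n} - {a}" b])
  then show ?thesis using assms by (simp add: prod.neutral)
qed

lemma sum_lessThan_permute: "p permutes {..<n} \<Longrightarrow> (\<Sum>a<n. h (p a)) = (\<Sum>i<n. h i)"
  using sum.permute[of p "{..<n}" h] by simp

lemma sum_permutes_sum_lessThan:
  "(\<Sum>p | p permutes {..<n}. \<Sum>a<n. h (p a)) = fact n * (\<Sum>i<n. h i :: real)"
  by (simp add: sum_lessThan_permute card_permutations)

lemma sum_permutes_sum_pairs:
  "(\<Sum>p | p permutes {..<n}. \<Sum>a<n. \<Sum>b<n. h (p a) (p b)) = fact n * (\<Sum>i<n. \<Sum>k<n. h i k :: real)"
proof -
  have "(\<Sum>a<n. \<Sum>b<n. h (p a) (p b)) = (\<Sum>a<n. \<Sum>k<n. h (p a) k)" if "p permutes {..<n}" for p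
    using that by (simp add: sum_lessThan_permute)
  then show ?thesis
    using sum_permutes_sum_lessThan[where n=n and h="\<lambda>i. \<Sum>k<n. h i k"] by simp
qed

section \<open>Monic orthogonal polynomials\<close>

text \<open>Gram--Schmidt applied to the monomials. A previous polynomial of norm 0 gets the
  coefficient 0 (division by 0), which is harmless since it is orthogonal to everything.\<close>
function orth_poly :: "real measure \<Rightarrow> nat \<Rightarrow> real poly" where
  "orth_poly M i = monom 1 i - (\<Sum>j<i. Polynomial.smult
      ((\<integral>t. t^i * poly (orth_poly M j) t \<partial>M) / (\<integral>t. (poly (orth_poly M j) t)^2 \<partial>M)) (orth_poly M j))"
  by auto
termination by (relation "Wellfounded.measure snd") auto

declare orth_poly.simps[simp del]

lemma orth_poly_monic: "degree (orth_poly M i) \<le> i \<and> coeff (orth_poly M i) i = 1"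
proof (induction i rule: less_induct)
  case (less i)
  have deg: "degree (Polynomial.smult c (orth_poly M j)) < i" if "j < i" for c j
    using less[OF that] that by (meson degree_smult_le le_less_trans)
  have "degree (\<Sum>j<i. Polynomial.smult (c j) (orth_poly M j)) \<le> i" for c
    by (rule degree_sum_le) (use deg in \<open>auto intro: less_imp_le simp del: degree_smult_eq\<close>)
  then have "degree (orth_poly M i) \<le> i"
    by (subst orth_poly.simps) (meson degree_diff_le degree_monom_le)
  moreover have "coeff (\<Sum>j<i. Polynomial.smult (c j) (orth_poly M j)) i = 0" for c
    unfolding coeff_sum using deg by (auto intro!: sum.neutral coeff_eq_0 simp del: coeff_smult)
  then have "coeff (orth_poly M i) i = 1"
    by (subst orth_poly.simps) (simp add: coeff_monom del: coeff_sum)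
  ultimately show ?case by simp
qed

locale moment_measure =
  fixes \<mu> :: "real measure"
  assumes sets_eq_borel: "sets \<mu> = sets borel"
    and integrable_power: "\<And>k::nat. integrable \<mu> (\<lambda>x. x^k)"
begin

lemma measurable_eq_borel: "measurable \<mu> N = measurable borel N"
  by (rule measurable_cong_sets) (auto simp: sets_eq_borel)

sublocale finite_measure \<mu>
proof
  have "integrable \<mu> (\<lambda>_. 1::real)" using integrable_power[of 0] by simp
  then show "emeasure \<mu> (space \<mu>) \<noteq> \<infinity>"
    by (simp add: integrable_iff_bounded)
qed

lemma borel_measurable_poly[measurable]: "poly p \<in> borel_measurable \<mu>"
  unfolding measurable_eq_borel by (intro borel_measurable_continuous_onI continuous_intros)

lemma integrable_poly: "integrable \<mu> (poly p)"
proof -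
  have "integrable \<mu> (\<lambda>t. \<Sum>k\<le>degree p. coeff p k * t ^ k)"
    using integrable_power by (intro Bochner_Integration.integrable_sum integrable_mult_right) auto
  then show ?thesis by (simp add: poly_altdef[abs_def])
qed

lemma integrable_poly_mult: "integrable \<mu> (\<lambda>t. poly p t * poly q t)"
  unfolding poly_mult[symmetric] by (rule integrable_poly)

lemma integrable_poly_mult_bounded:
  assumes w: "w \<in> borel_measurable borel" and bound: "\<And>t. \<bar>w t\<bar> \<le> C"
  shows "integrable \<mu> (\<lambda>t. poly p t * w t)"
proof (rule Bochner_Integration.integrable_bound)
  show "integrable \<mu> (\<lambda>t. C * \<bar>poly p t\<bar>)" using integrable_poly by auto
  show "(\<lambda>t. poly p t * w t) \<in> borel_measurable \<mu>"
    using w unfolding measurable_eq_borel[symmetric] by measurable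
  have "C \<ge> 0" using bound[of 0] by linarith
  moreover have "\<bar>w t\<bar> * \<bar>poly p t\<bar> \<le> C * \<bar>poly p t\<bar>" for t
    by (rule mult_right_mono[OF bound]) simp
  ultimately show "AE t in \<mu>. norm (poly p t * w t) \<le> norm (C * \<bar>poly p t\<bar>)"
    by (simp add: abs_mult mult.commute)
qed

lemma integral_mult_eq_0_if_sq_0:
  assumes "(\<integral>t. (poly q t)^2 \<partial>\<mu>) = 0"
  shows "(\<integral>t. g t * poly q t \<partial>\<mu>) = 0"
proof -
  have "AE t in \<mu>. (poly q t)^2 = 0"
    using integral_nonneg_eq_0_iff_AE[of \<mu> "\<lambda>t. (poly q t)^2"] assms integrable_poly_mult[of q q]
    by (simp add: power2_eq_square)
  then have "AE t in \<mu>. g t * poly q t = 0" by (auto elim!: AE_mp)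
  then show ?thesis by (simp add: integral_eq_zero_AE)
qed

lemma orth_poly_orthogonal:
  "j < i \<Longrightarrow> (\<integral>t. poly (orth_poly \<mu> i) t * poly (orth_poly \<mu> j) t \<partial>\<mu>) = 0"
proof (induction i arbitrary: j rule: less_induct)
  case (less i)
  define p where "p = orth_poly \<mu>"
  define c where "c l = (\<integral>t. t^i * poly (p l) t \<partial>\<mu>) / (\<integral>t. (poly (p l) t)^2 \<partial>\<mu>)" for l
  have integrable: "integrable \<mu> (\<lambda>t. poly P t * poly (p j) t)" for P
    by (rule integrable_poly_mult)
  have pi: "poly (p i) t = t^i - (\<Sum>l<i. c l * poly (p l) t)" for t
    unfolding p_def c_def by (subst orth_poly.simps) (simp add: poly_monom poly_sum)
  have orth: "(\<integral>t. poly (p l) t * poly (p j) t \<partial>\<mu>) = 0" if "l < i" "l \<noteq> j" for l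
    using less.IH[of j l] less.IH[of l j] less.prems that
    by (cases "l < j") (simp_all add: p_def mult.commute)
  have "(\<integral>t. poly (p i) t * poly (p j) t \<partial>\<mu>) =
        (\<integral>t. poly (monom 1 i) t * poly (p j) t - (\<Sum>l<i. c l * (poly (p l) t * poly (p j) t)) \<partial>\<mu>)"
    unfolding pi by (intro Bochner_Integration.integral_cong refl)
      (simp add: poly_monom algebra_simps sum_distrib_left sum_distrib_right)
  also have "\<dots> = (\<integral>t. t^i * poly (p j) t \<partial>\<mu>) - (\<Sum>l<i. c l * (\<integral>t. poly (p l) t * poly (p j) t \<partial>\<mu>))"
    using integrable integrable[of "monom 1 i"]
    by (simp add: Bochner_Integration.integral_sum Bochner_Integration.integrable_sum poly_monom)
  also have "(\<Sum>l<i. c l * (\<integral>t. poly (p l) t * poly (p j) t \<partial>\<mu>)) = c j * (\<integral>t. (poly (p j) t)^2 \<partial>\<mu>)"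
    using less.prems by (subst sum.remove[of _ j]) (auto simp: orth power2_eq_square intro!: sum.neutral)
  also have "\<dots> = (\<integral>t. t^i * poly (p j) t \<partial>\<mu>)"
    using integral_mult_eq_0_if_sq_0[of "p j" "\<lambda>t. t^i"] by (auto simp: c_def)
  finally show ?case by (simp add: p_def)
qed

definition orth_norm :: "nat \<Rightarrow> real" where
  "orth_norm i = (\<integral>t. (poly (orth_poly \<mu> i) t)^2 \<partial>\<mu>)"

lemma orth_norm_nonneg [simp]: "orth_norm i \<ge> 0"
  unfolding orth_norm_def by simp

definition gram :: "(nat \<Rightarrow> real poly) \<Rightarrow> (real \<Rightarrow> real) \<Rightarrow> nat \<Rightarrow> nat \<Rightarrow> real" where
  "gram \<psi> w i k = (\<integral>t. poly (\<psi> i) t * poly (\<psi> k) t * w t \<partial>\<mu>)"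

lemma gram_orth_poly: "gram (orth_poly \<mu>) (\<lambda>_. 1) i k = (if i = k then orth_norm i else 0)"
  using orth_poly_orthogonal[of i k] orth_poly_orthogonal[of k i]
  by (auto simp: gram_def orth_norm_def power2_eq_square mult.commute dest!: nat_neq_iff[THEN iffD1])

lemma has_bochner_integral_gram:
  assumes "w \<in> borel_measurable borel" "\<And>t. \<bar>w t\<bar> \<le> C"
  shows "has_bochner_integral \<mu> (\<lambda>t. poly (\<psi> i) t * poly (\<psi> k) t * w t) (gram \<psi> w i k)"
  using integrable_poly_mult_bounded[OF assms, of "\<psi> i * \<psi> k"]
  by (simp add: has_bochner_integral_iff gram_def)

end

section \<open>Integrals of the squared determinant\<close>

definition det_ensemble :: "real measure \<Rightarrow> (nat \<Rightarrow> real poly) \<Rightarrow> nat \<Rightarrow> (nat \<Rightarrow> real) measure" where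
  "det_ensemble M \<psi> n = density (ope_base M n) (\<lambda>x. ennreal ((poly_det \<psi> n x)^2 / fact n))"

context moment_measure
begin

lemma borel_measurable_poly_det[measurable]: "poly_det \<psi> n \<in> borel_measurable (ope_base \<mu> n)"
  unfolding poly_det_def[abs_def] ope_base_def by measurable

lemma has_bochner_integral_poly_det_sq_prod:
  assumes w: "\<And>j. w j \<in> borel_measurable borel" and bound: "\<And>j t. \<bar>w j t\<bar> \<le> C"
  shows "has_bochner_integral (ope_base \<mu> n) (\<lambda>x. (poly_det \<psi> n x)^2 * (\<Prod>j<n. w j (x j)))
     (\<Sum>p | p permutes {..<n}. \<Sum>q | q permutes {..<n}. of_int (sign p * sign q) *
        (\<Prod>j<n. gram \<psi> (w j) (p j) (q j)))"
proof -
  interpret product_sigma_finite "\<lambda>_::nat. \<mu>"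
    by (simp add: product_sigma_finite_def sigma_finite_measure_axioms)
  have "has_bochner_integral (ope_base \<mu> n)
      (\<lambda>x. \<Prod>j<n. poly (\<psi> (p j)) (x j) * poly (\<psi> (q j)) (x j) * w j (x j))
      (\<Prod>j<n. gram \<psi> (w j) (p j) (q j))" for p q
  proof -
    define f where "f j t = poly (\<psi> (p j)) t * poly (\<psi> (q j)) t * w j t" for j t
    have "integrable \<mu> (f j)" for j
      unfolding f_def using has_bochner_integral_gram[OF w bound] by (rule integrable.intros)
    then show ?thesis
      using product_integrable_prod[of "{..<n}" f] product_integral_prod[of "{..<n}" f]
      unfolding has_bochner_integral_iff ope_base_def gram_def f_def by simp
  qed
  then show ?thesis
    unfolding poly_det_sq_mult_prod
    by (intro has_bochner_integral_sum has_bochner_integral_mult_right)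
qed

lemma has_bochner_integral_poly_det_sq:
  assumes offdiag: "\<And>i k. i < n \<Longrightarrow> k < n \<Longrightarrow> i \<noteq> k \<Longrightarrow> gram \<psi> (\<lambda>_. 1) i k = 0"
  shows "has_bochner_integral (ope_base \<mu> n) (\<lambda>x. (poly_det \<psi> n x)^2)
           (fact n * (\<Prod>i<n. gram \<psi> (\<lambda>_. 1) i i))"
proof -
  have "(\<Sum>p | p permutes {..<n}. \<Sum>q | q permutes {..<n}. of_int (sign p * sign q) *
          (\<Prod>j<n. gram \<psi> (\<lambda>_. 1) (p j) (q j)))
      = (\<Sum>p | p permutes {..<n}. \<Prod>j<n. gram \<psi> (\<lambda>_. 1) (p j) (p j))"
    using offdiag by (intro sum.cong refl sum_signed_permutes_diagonal[where a=n]) auto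
  also have "\<dots> = (\<Sum>p | p permutes {..<n}. \<Prod>i<n. gram \<psi> (\<lambda>_. 1) i i)"
    using prod.permute[of _ "{..<n}" "\<lambda>i. gram \<psi> (\<lambda>_. 1) i i"] by (auto simp: comp_def)
  finally show ?thesis
    using has_bochner_integral_poly_det_sq_prod[of "\<lambda>_ _. 1" 1 n \<psi>]
    by (simp add: card_permutations)
qed

lemma ope_weight_eq_orth_poly: "ope_weight n x = (poly_det (orth_poly \<mu>) n x)^2"
  by (rule ope_weight_eq_poly_det_sq) (use orth_poly_monic in auto)

lemma ope_partition_eq: "ope_partition \<mu> n = fact n * (\<Prod>i<n. orth_norm i)"
  using has_bochner_integral_poly_det_sq[of n "orth_poly \<mu>"]
  unfolding ope_partition_def ope_weight_eq_orth_poly gram_orth_poly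
  by (simp add: has_bochner_integral_iff)

definition orthonormal_poly :: "nat \<Rightarrow> real poly" where
  "orthonormal_poly i = Polynomial.smult (1 / sqrt (orth_norm i)) (orth_poly \<mu> i)"

lemma gram_orthonormal_poly:
  assumes "orth_norm i > 0" "orth_norm k > 0"
  shows "gram orthonormal_poly (\<lambda>_. 1) i k = (if i = k then 1 else 0)"
proof -
  have "gram orthonormal_poly (\<lambda>_. 1) i k
      = gram (orth_poly \<mu>) (\<lambda>_. 1) i k / (sqrt (orth_norm i) * sqrt (orth_norm k))"
    unfolding gram_def orthonormal_poly_def by (simp add: mult_ac)
  then show ?thesis using assms by (simp add: gram_orth_poly)
qed

lemma OPE_eq_det_ensemble:
  assumes pos: "\<And>i. i < n \<Longrightarrow> orth_norm i > 0"
  shows "OPE \<mu> n = det_ensemble \<mu> orthonormal_poly n"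
proof -
  have "poly_det (orth_poly \<mu>) n x
      = poly_det (\<lambda>i. Polynomial.smult (sqrt (orth_norm i)) (orthonormal_poly i)) n x" for x
    using pos by (intro poly_det_cong) (simp add: orthonormal_poly_def less_imp_neq[symmetric])
  then have "ope_weight n x = (\<Prod>i<n. orth_norm i) * (poly_det orthonormal_poly n x)^2" for x
    unfolding ope_weight_eq_orth_poly poly_det_smult
    by (simp add: power_mult_distrib prod_power_distrib)
  moreover have "(\<Prod>i<n. orth_norm i) \<noteq> 0" using pos by (simp add: less_imp_neq[symmetric])
  ultimately show ?thesis
    unfolding OPE_def det_ensemble_def ope_partition_eq by simp
qed

end

section \<open>Variance of linear statistics\<close>

lemma cvariance_eq_Re_Im:
  assumes "has_bochner_integral M (\<lambda>x. Re (X x)) mr" "has_bochner_integral M (\<lambda>x. Im (X x)) mi"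
    and "has_bochner_integral M (\<lambda>x. (Re (X x) - mr)^2) vr"
    and "has_bochner_integral M (\<lambda>x. (Im (X x) - mi)^2) vi"
  shows "cvariance M X = vr + vi"
proof -
  have X: "X = (\<lambda>x. of_real (Re (X x)) + \<i> * of_real (Im (X x)))"
    by (simp add: fun_eq_iff complex_eq_iff)
  have "has_bochner_integral M X (of_real mr + \<i> * of_real mi)"
    by (subst X, intro has_bochner_integral_add has_bochner_integral_mult_right
        has_bochner_integral_of_real assms(1,2))
  then have mean: "integral\<^sup>L M X = of_real mr + \<i> * of_real mi"
    by (rule has_bochner_integral_integral_eq)
  have "(cmod (X x - (of_real mr + \<i> * of_real mi)))^2 = (Re (X x) - mr)^2 + (Im (X x) - mi)^2" for x
    by (simp add: cmod_power2)
  then show ?thesis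
    unfolding cvariance_def mean
    by (simp add: has_bochner_integral_integral_eq[OF has_bochner_integral_add[OF assms(3,4)]])
qed

lemma borel_measurable_Re_Im_bounded:
  assumes "H \<in> borel_measurable borel" "\<And>t. cmod (H t) \<le> C"
  shows "(\<lambda>t. Re (H t)) \<in> borel_measurable borel" "\<And>t. \<bar>Re (H t)\<bar> \<le> C"
    and "(\<lambda>t. Im (H t)) \<in> borel_measurable borel" "\<And>t. \<bar>Im (H t)\<bar> \<le> C"
  using assms abs_Re_le_cmod abs_Im_le_cmod by (auto intro: order_trans)

locale orthonormal_polys = moment_measure +
  fixes \<psi> :: "nat \<Rightarrow> real poly" and n :: nat
  assumes orthonormal: "\<And>i k. i < n \<Longrightarrow> k < n \<Longrightarrow> gram \<psi> (\<lambda>_. 1) i k = (if i = k then 1 else 0)"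
begin

lemma has_bochner_integral_poly_det_sq_orthonormal:
  "has_bochner_integral (ope_base \<mu> n) (\<lambda>x. (poly_det \<psi> n x)^2) (fact n)"
  using has_bochner_integral_poly_det_sq[of n \<psi>] orthonormal by simp

lemma has_bochner_integral_poly_det_sq_point:
  assumes a: "a < n" and W: "W \<in> borel_measurable borel" "\<And>t. \<bar>W t\<bar> \<le> C"
  shows "has_bochner_integral (ope_base \<mu> n) (\<lambda>x. (poly_det \<psi> n x)^2 * W (x a))
           (\<Sum>p | p permutes {..<n}. gram \<psi> W (p a) (p a))"
proof -
  define w where "w j = (if j = a then W else (\<lambda>_. 1))" for j
  have w: "w j \<in> borel_measurable borel" "\<bar>w j t\<bar> \<le> max C 1" for j t
    using W by (auto simp: w_def le_max_iff_disj)
  have "(\<Prod>j<n. w j (x j)) = W (x a)" for x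
    using a by (subst prod_lessThan_point[of a]) (auto simp: w_def)
  moreover have "(\<Sum>p | p permutes {..<n}. \<Sum>q | q permutes {..<n}. of_int (sign p * sign q) *
      (\<Prod>j<n. gram \<psi> (w j) (p j) (q j))) = (\<Sum>p | p permutes {..<n}. gram \<psi> W (p a) (p a))"
  proof (intro sum.cong refl)
    fix p assume "p \<in> {p. p permutes {..<n}}"
    then have p: "p permutes {..<n}" by simp
    have "(\<Prod>j<n. gram \<psi> (w j) (p j) (p j)) = gram \<psi> W (p a) (p a)"
      using a p by (subst prod_lessThan_point[of a]) (auto simp: orthonormal permutes_lessThan_less w_def)
    then show "(\<Sum>q | q permutes {..<n}. of_int (sign p * sign q) * (\<Prod>j<n. gram \<psi> (w j) (p j) (q j)))
        = gram \<psi> W (p a) (p a)"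
      using p by (subst sum_signed_permutes_diagonal[where a=a]) (auto simp: orthonormal w_def)
  qed
  ultimately show ?thesis using has_bochner_integral_poly_det_sq_prod[of w "max C 1" n \<psi>] w by simp
qed

lemma has_bochner_integral_poly_det_sq_two_points:
  assumes ab: "a < n" "b < n" "a \<noteq> b"
    and U: "U \<in> borel_measurable borel" "\<And>t. \<bar>U t\<bar> \<le> C"
    and V: "V \<in> borel_measurable borel" "\<And>t. \<bar>V t\<bar> \<le> C"
  shows "has_bochner_integral (ope_base \<mu> n) (\<lambda>x. (poly_det \<psi> n x)^2 * (U (x a) * V (x b)))
           (\<Sum>p | p permutes {..<n}. gram \<psi> U (p a) (p a) * gram \<psi> V (p b) (p b)
                                    - gram \<psi> U (p a) (p b) * gram \<psi> V (p b) (p a))"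
proof -
  define w where "w j = (if j = a then U else if j = b then V else (\<lambda>_. 1))" for j
  have w: "w j \<in> borel_measurable borel" "\<bar>w j t\<bar> \<le> max C 1" for j t
    using U V by (auto simp: w_def le_max_iff_disj)
  have "(\<Prod>j<n. w j (x j)) = U (x a) * V (x b)" for x
    using ab by (subst prod_lessThan_two_points[of a n b]) (auto simp: w_def)
  moreover have "(\<Sum>p | p permutes {..<n}. \<Sum>q | q permutes {..<n}. of_int (sign p * sign q) *
      (\<Prod>j<n. gram \<psi> (w j) (p j) (q j))) = (\<Sum>p | p permutes {..<n}.
        gram \<psi> U (p a) (p a) * gram \<psi> V (p b) (p b) - gram \<psi> U (p a) (p b) * gram \<psi> V (p b) (p a))"
  proof (intro sum.cong refl)
    fix p assume "p \<in> {p. p permutes {..<n}}"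
    then have p: "p permutes {..<n}" by simp
    have "(\<Prod>j<n. gram \<psi> (w j) (p j) (p j)) = gram \<psi> U (p a) (p a) * gram \<psi> V (p b) (p b)"
      and "(\<Prod>j<n. gram \<psi> (w j) (p j) (p (Transposition.transpose a b j)))
             = gram \<psi> U (p a) (p b) * gram \<psi> V (p b) (p a)"
      using ab p by (subst prod_lessThan_two_points[of a n b];
          auto simp: orthonormal permutes_lessThan_less w_def)+
    then show "(\<Sum>q | q permutes {..<n}. of_int (sign p * sign q) * (\<Prod>j<n. gram \<psi> (w j) (p j) (q j)))
        = gram \<psi> U (p a) (p a) * gram \<psi> V (p b) (p b) - gram \<psi> U (p a) (p b) * gram \<psi> V (p b) (p a)"
      using p ab by (subst sum_signed_permutes_two_points) (auto simp: orthonormal w_def)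
  qed
  ultimately show ?thesis using has_bochner_integral_poly_det_sq_prod[of w "max C 1" n \<psi>] w by simp
qed

lemma has_bochner_integral_poly_det_sq_lin_stat:
  assumes u: "u \<in> borel_measurable borel" "\<And>t. \<bar>u t\<bar> \<le> C"
  shows "has_bochner_integral (ope_base \<mu> n) (\<lambda>x. (poly_det \<psi> n x)^2 * (\<Sum>a<n. u (x a)))
           (fact n * (\<Sum>i<n. gram \<psi> u i i))"
proof -
  have "has_bochner_integral (ope_base \<mu> n) (\<lambda>x. \<Sum>a<n. (poly_det \<psi> n x)^2 * u (x a))
          (\<Sum>a<n. \<Sum>p | p permutes {..<n}. gram \<psi> u (p a) (p a))"
    by (intro has_bochner_integral_sum has_bochner_integral_poly_det_sq_point[OF _ u]) simp
  moreover have "(\<Sum>a<n. \<Sum>p | p permutes {..<n}. gram \<psi> u (p a) (p a)) = fact n * (\<Sum>i<n. gram \<psi> u i i)"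
    by (subst sum.swap) (rule sum_permutes_sum_lessThan)
  ultimately show ?thesis by (simp add: sum_distrib_left)
qed

text \<open>The diagonal a = b and the off-diagonal terms share one formula because the
  second summand vanishes for i = k.\<close>
lemma has_bochner_integral_poly_det_sq_pair:
  assumes ab: "a < n" "b < n" and u: "u \<in> borel_measurable borel" "\<And>t. \<bar>u t\<bar> \<le> C"
  defines "h i k \<equiv> (if i = k then gram \<psi> (\<lambda>t. (u t)^2) i i else 0)
                      + (gram \<psi> u i i * gram \<psi> u k k - (gram \<psi> u i k)^2)"
  shows "has_bochner_integral (ope_base \<mu> n) (\<lambda>x. (poly_det \<psi> n x)^2 * (u (x a) * u (x b)))
     (\<Sum>p | p permutes {..<n}. h (p a) (p b))"
proof (cases "a = b")
  case True
  have "\<bar>(u t)^2\<bar> \<le> C^2" for t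
    using power_mono[OF u(2) abs_ge_zero, of t 2] by simp
  then show ?thesis
    using True has_bochner_integral_poly_det_sq_point[OF ab(1), of "\<lambda>t. (u t)^2" "C^2"] u(1)
    by (simp add: h_def power2_eq_square)
next
  case False
  have "(\<Sum>p | p permutes {..<n}. gram \<psi> u (p a) (p a) * gram \<psi> u (p b) (p b)
          - gram \<psi> u (p a) (p b) * gram \<psi> u (p b) (p a))
      = (\<Sum>p | p permutes {..<n}. h (p a) (p b))"
  proof (intro sum.cong refl)
    fix p assume "p \<in> {p. p permutes {..<n}}"
    then have "p a \<noteq> p b" using False permutes_inj[of p "{..<n}"] by (auto dest: injD)
    moreover have "gram \<psi> u (p b) (p a) = gram \<psi> u (p a) (p b)"
      unfolding gram_def by (simp add: mult_ac)
    ultimately show "gram \<psi> u (p a) (p a) * gram \<psi> u (p b) (p b) - gram \<psi> u (p a) (p b) * gram \<psi> u (p b) (p a)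
        = h (p a) (p b)"
      by (simp add: h_def power2_eq_square)
  qed
  then show ?thesis
    using has_bochner_integral_poly_det_sq_two_points[OF ab False u u] by simp
qed

lemma has_bochner_integral_poly_det_sq_lin_stat_sq:
  assumes u: "u \<in> borel_measurable borel" "\<And>t. \<bar>u t\<bar> \<le> C"
  shows "has_bochner_integral (ope_base \<mu> n) (\<lambda>x. (poly_det \<psi> n x)^2 * (\<Sum>a<n. u (x a))^2)
     (fact n * ((\<Sum>i<n. gram \<psi> (\<lambda>t. (u t)^2) i i) + (\<Sum>i<n. gram \<psi> u i i)^2
                - (\<Sum>i<n. \<Sum>k<n. (gram \<psi> u i k)^2)))"
proof -
  define h where "h i k = (if i = k then gram \<psi> (\<lambda>t. (u t)^2) i i else 0)
                      + (gram \<psi> u i i * gram \<psi> u k k - (gram \<psi> u i k)^2)" for i k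
  have swap: "(\<Sum>a<n. \<Sum>b<n. \<Sum>p | p permutes {..<n}. h (p a) (p b)) = fact n * (\<Sum>i<n. \<Sum>k<n. h i k)"
    by (simp add: sum.swap[of _ "{p. p permutes {..<n}}"] sum_permutes_sum_pairs)
  have sum_h: "(\<Sum>i<n. \<Sum>k<n. h i k) = (\<Sum>i<n. gram \<psi> (\<lambda>t. (u t)^2) i i) + (\<Sum>i<n. gram \<psi> u i i)^2
                - (\<Sum>i<n. \<Sum>k<n. (gram \<psi> u i k)^2)"
    by (simp add: h_def sum.distrib sum_subtractf power2_eq_square sum_product)
  have expand: "(poly_det \<psi> n x)^2 * (\<Sum>a<n. u (x a))^2
      = (\<Sum>a<n. \<Sum>b<n. (poly_det \<psi> n x)^2 * (u (x a) * u (x b)))" for x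
    unfolding power2_eq_square[of "\<Sum>a<n. u (x a)"] sum_product by (simp add: sum_distrib_left)
  have "has_bochner_integral (ope_base \<mu> n)
      (\<lambda>x. \<Sum>a<n. \<Sum>b<n. (poly_det \<psi> n x)^2 * (u (x a) * u (x b)))
      (\<Sum>a<n. \<Sum>b<n. \<Sum>p | p permutes {..<n}. h (p a) (p b))"
    unfolding h_def by (intro has_bochner_integral_sum has_bochner_integral_poly_det_sq_pair[OF _ _ u]) auto
  then show ?thesis unfolding expand swap sum_h .
qed

lemma has_bochner_integral_det_ensemble:
  assumes "f \<in> borel_measurable (ope_base \<mu> n)"
    and "has_bochner_integral (ope_base \<mu> n) (\<lambda>x. (poly_det \<psi> n x)^2 * f x) (fact n * v)"
  shows "has_bochner_integral (det_ensemble \<mu> \<psi> n) f v"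
proof -
  have "has_bochner_integral (ope_base \<mu> n) (\<lambda>x. (poly_det \<psi> n x)^2 * f x / fact n) (fact n * v / fact n)"
    using assms(2) by (rule has_bochner_integral_divide_zero)
  then show ?thesis
    unfolding det_ensemble_def using assms(1)
    by (intro has_bochner_integral_density) (simp_all add: field_simps)
qed

lemma borel_measurable_lin_stat [measurable]:
  fixes u :: "real \<Rightarrow> real"
  assumes "u \<in> borel_measurable borel"
  shows "(\<lambda>x. \<Sum>a<n. u (x a)) \<in> borel_measurable (ope_base \<mu> n)"
proof -
  have "(\<lambda>x. u (x a)) \<in> borel_measurable (ope_base \<mu> n)" if "a \<in> {..<n}" for a
    using measurable_component_singleton[OF that] assms
    unfolding ope_base_def measurable_eq_borel[symmetric] by (rule measurable_compose)
  then show ?thesis by (auto intro!: borel_measurable_sum)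
qed

definition variance_form :: "(real \<Rightarrow> real) \<Rightarrow> real" where
  "variance_form u = (\<Sum>i<n. gram \<psi> (\<lambda>t. (u t)^2) i i) - (\<Sum>i<n. \<Sum>k<n. (gram \<psi> u i k)^2)"

lemma has_bochner_integral_lin_stat:
  assumes u: "u \<in> borel_measurable borel" "\<And>t. \<bar>u t\<bar> \<le> C"
  shows "has_bochner_integral (det_ensemble \<mu> \<psi> n) (\<lambda>x. \<Sum>a<n. u (x a)) (\<Sum>i<n. gram \<psi> u i i)"
  using u(1) has_bochner_integral_poly_det_sq_lin_stat[OF u] by (intro has_bochner_integral_det_ensemble) auto

lemma has_bochner_integral_lin_stat_centered_sq:
  assumes u: "u \<in> borel_measurable borel" "\<And>t. \<bar>u t\<bar> \<le> C"
  shows "has_bochner_integral (det_ensemble \<mu> \<psi> n)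
           (\<lambda>x. ((\<Sum>a<n. u (x a)) - (\<Sum>i<n. gram \<psi> u i i))^2) (variance_form u)"
proof -
  define m where "m = (\<Sum>i<n. gram \<psi> u i i)"
  have expand: "((\<Sum>a<n. u (x a)) - m)^2 = (\<Sum>a<n. u (x a))^2 - 2 * m * (\<Sum>a<n. u (x a)) + m^2 * 1" for x
    by (simp add: power2_eq_square algebra_simps)
  have "has_bochner_integral (det_ensemble \<mu> \<psi> n) (\<lambda>x. (\<Sum>a<n. u (x a))^2)
          ((\<Sum>i<n. gram \<psi> (\<lambda>t. (u t)^2) i i) + m^2 - (\<Sum>i<n. \<Sum>k<n. (gram \<psi> u i k)^2))"
    using u(1) has_bochner_integral_poly_det_sq_lin_stat_sq[OF u] unfolding m_def
    by (intro has_bochner_integral_det_ensemble) auto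
  moreover have "has_bochner_integral (det_ensemble \<mu> \<psi> n) (\<lambda>_. 1::real) 1"
    using has_bochner_integral_det_ensemble[of "\<lambda>_. 1" 1] has_bochner_integral_poly_det_sq_orthonormal by simp
  ultimately have "has_bochner_integral (det_ensemble \<mu> \<psi> n) (\<lambda>x. ((\<Sum>a<n. u (x a)) - m)^2)
      ((\<Sum>i<n. gram \<psi> (\<lambda>t. (u t)^2) i i) + m^2 - (\<Sum>i<n. \<Sum>k<n. (gram \<psi> u i k)^2) - 2 * m * m + m^2 * 1)"
    unfolding expand using has_bochner_integral_lin_stat[OF u]
    by (intro has_bochner_integral_add has_bochner_integral_diff has_bochner_integral_mult_right)
      (simp_all add: m_def)
  then show ?thesis
    by (simp add: variance_form_def m_def power2_eq_square)
qed

lemma cvariance_lin_stat: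
  assumes H: "H \<in> borel_measurable borel" "\<And>t. cmod (H t) \<le> C"
  shows "cvariance (det_ensemble \<mu> \<psi> n) (\<lambda>x. \<Sum>j<n. H (x j))
           = variance_form (\<lambda>t. Re (H t)) + variance_form (\<lambda>t. Im (H t))"
proof -
  have Re: "(\<lambda>t. Re (H t)) \<in> borel_measurable borel" "\<bar>Re (H t)\<bar> \<le> C"
    and Im: "(\<lambda>t. Im (H t)) \<in> borel_measurable borel" "\<bar>Im (H t)\<bar> \<le> C" for t
    using H abs_Re_le_cmod[of "H t"] abs_Im_le_cmod[of "H t"] by (auto intro: order_trans)
  show ?thesis
    by (rule cvariance_eq_Re_Im[where mr="\<Sum>i<n. gram \<psi> (\<lambda>t. Re (H t)) i i"
          and mi="\<Sum>i<n. gram \<psi> (\<lambda>t. Im (H t)) i i"])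
      (simp_all add: has_bochner_integral_lin_stat[OF Re] has_bochner_integral_lin_stat[OF Im]
         has_bochner_integral_lin_stat_centered_sq[OF Re] has_bochner_integral_lin_stat_centered_sq[OF Im])
qed

definition ope_kernel :: "real \<Rightarrow> real \<Rightarrow> real" where
  "ope_kernel s t = (\<Sum>i<n. poly (\<psi> i) s * poly (\<psi> i) t)"

lemma ope_kernel_sq:
  "(ope_kernel s t)^2 = (\<Sum>i<n. \<Sum>k<n. poly (\<psi> i) s * poly (\<psi> k) s * (poly (\<psi> i) t * poly (\<psi> k) t))"
  unfolding ope_kernel_def power2_eq_square sum_product by (intro sum.cong refl) (simp add: mult_ac)

lemma has_bochner_integral_kernel_sq_diff:
  assumes u: "u \<in> borel_measurable borel" "\<And>t. \<bar>u t\<bar> \<le> C"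
  shows "has_bochner_integral \<mu> (\<lambda>t. (u s - u t)^2 * (ope_kernel s t)^2)
    (\<Sum>i<n. \<Sum>k<n. (if i = k then 1 else 0) * (poly (\<psi> i) s * poly (\<psi> k) s * (u s)^2)
        - 2 * gram \<psi> u i k * (poly (\<psi> i) s * poly (\<psi> k) s * u s)
        + gram \<psi> (\<lambda>t. (u t)^2) i k * (poly (\<psi> i) s * poly (\<psi> k) s * 1))"
proof -
  define c where "c i k = poly (\<psi> i) s * poly (\<psi> k) s" for i k
  have sq: "\<bar>(u t)^2\<bar> \<le> C^2" for t
    using power_mono[OF u(2) abs_ge_zero, of t 2] by simp
  have "has_bochner_integral \<mu>
      (\<lambda>t. \<Sum>i<n. \<Sum>k<n. c i k * ((u s)^2 * (poly (\<psi> i) t * poly (\<psi> k) t * 1)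
         - 2 * u s * (poly (\<psi> i) t * poly (\<psi> k) t * u t) + poly (\<psi> i) t * poly (\<psi> k) t * (u t)^2))
      (\<Sum>i<n. \<Sum>k<n. c i k * ((u s)^2 * gram \<psi> (\<lambda>_. 1) i k
         - 2 * u s * gram \<psi> u i k + gram \<psi> (\<lambda>t. (u t)^2) i k))"
    using u(1) by (intro has_bochner_integral_sum has_bochner_integral_mult_right has_bochner_integral_add
        has_bochner_integral_diff has_bochner_integral_gram[OF _ u(2)] has_bochner_integral_gram[OF _ sq]
        has_bochner_integral_gram[of "\<lambda>_. 1" 1]) auto
  moreover have "(u s - u t)^2 * (ope_kernel s t)^2
      = (\<Sum>i<n. \<Sum>k<n. c i k * ((u s)^2 * (poly (\<psi> i) t * poly (\<psi> k) t * 1)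
         - 2 * u s * (poly (\<psi> i) t * poly (\<psi> k) t * u t) + poly (\<psi> i) t * poly (\<psi> k) t * (u t)^2))" for t
    unfolding ope_kernel_sq c_def by (simp add: sum_distrib_left power2_eq_square algebra_simps)
  moreover have "c i k * ((u s)^2 * gram \<psi> (\<lambda>_. 1) i k - 2 * u s * gram \<psi> u i k + gram \<psi> (\<lambda>t. (u t)^2) i k)
      = (if i = k then 1 else 0) * (c i k * (u s)^2) - 2 * gram \<psi> u i k * (c i k * u s)
        + gram \<psi> (\<lambda>t. (u t)^2) i k * (c i k * 1)" if "i < n" "k < n" for i k
    using that by (simp add: orthonormal algebra_simps)
  ultimately show ?thesis by (simp add: c_def)
qed

lemma has_bochner_integral_kernel_form:
  assumes u: "u \<in> borel_measurable borel" "\<And>t. \<bar>u t\<bar> \<le> C"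
  shows "has_bochner_integral \<mu> (\<lambda>s. \<integral>t. (u s - u t)^2 * (ope_kernel s t)^2 \<partial>\<mu>)
           (2 * variance_form u)"
proof -
  have sq: "\<bar>(u t)^2\<bar> \<le> C^2" for t
    using power_mono[OF u(2) abs_ge_zero, of t 2] by simp
  have "has_bochner_integral \<mu> (\<lambda>s. \<integral>t. (u s - u t)^2 * (ope_kernel s t)^2 \<partial>\<mu>)
    (\<Sum>i<n. \<Sum>k<n. (if i = k then 1 else 0) * gram \<psi> (\<lambda>t. (u t)^2) i k
        - 2 * gram \<psi> u i k * gram \<psi> u i k + gram \<psi> (\<lambda>t. (u t)^2) i k * gram \<psi> (\<lambda>_. 1) i k)"
    unfolding has_bochner_integral_integral_eq[OF has_bochner_integral_kernel_sq_diff[OF u]]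
    using u(1) by (intro has_bochner_integral_sum has_bochner_integral_mult_right has_bochner_integral_add
        has_bochner_integral_diff has_bochner_integral_gram[OF _ u(2)] has_bochner_integral_gram[OF _ sq]
        has_bochner_integral_gram[of "\<lambda>_. 1" 1]) auto
  moreover have "(\<Sum>i<n. \<Sum>k<n. (if i = k then 1 else 0) * gram \<psi> (\<lambda>t. (u t)^2) i k
        - 2 * gram \<psi> u i k * gram \<psi> u i k + gram \<psi> (\<lambda>t. (u t)^2) i k * gram \<psi> (\<lambda>_. 1) i k)
      = (\<Sum>i<n. \<Sum>k<n. (if i = k then 2 * gram \<psi> (\<lambda>t. (u t)^2) i k else 0) - 2 * (gram \<psi> u i k)^2)"
    by (intro sum.cong refl) (auto simp: orthonormal power2_eq_square)
  moreover have "\<dots> = 2 * variance_form u"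
    unfolding variance_form_def by (simp add: sum_subtractf sum_distrib_left right_diff_distrib)
  ultimately show ?thesis by simp
qed

lemma integrable_kernel_sq_Re_Im:
  assumes H: "H \<in> borel_measurable borel" "\<And>t. cmod (H t) \<le> C"
  shows "integrable \<mu> (\<lambda>t. (Re (H s) - Re (H t))^2 * (ope_kernel s t)^2)"
    and "integrable \<mu> (\<lambda>t. (Im (H s) - Im (H t))^2 * (ope_kernel s t)^2)"
  using has_bochner_integral_kernel_sq_diff[OF borel_measurable_Re_Im_bounded(1,2)[OF H]]
    has_bochner_integral_kernel_sq_diff[OF borel_measurable_Re_Im_bounded(3,4)[OF H]]
  by (blast intro: integrable.intros)+

lemma integral_kernel_sq_cdiff:
  assumes H: "H \<in> borel_measurable borel" "\<And>t. cmod (H t) \<le> C"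
  shows "integrable \<mu> (\<lambda>t. (cmod (H s - H t))^2 * (ope_kernel s t)^2)"
    and "(\<integral>t. (cmod (H s - H t))^2 * (ope_kernel s t)^2 \<partial>\<mu>)
           = (\<integral>t. (Re (H s) - Re (H t))^2 * (ope_kernel s t)^2 \<partial>\<mu>)
             + (\<integral>t. (Im (H s) - Im (H t))^2 * (ope_kernel s t)^2 \<partial>\<mu>)"
  using integrable_kernel_sq_Re_Im[OF H, of s]
  by (simp_all add: cmod_power2 distrib_right)

lemma has_bochner_integral_kernel_cform:
  assumes H: "H \<in> borel_measurable borel" "\<And>t. cmod (H t) \<le> C"
  shows "has_bochner_integral \<mu> (\<lambda>s. \<integral>t. (cmod (H s - H t))^2 * (ope_kernel s t)^2 \<partial>\<mu>)
           (2 * cvariance (det_ensemble \<mu> \<psi> n) (\<lambda>x. \<Sum>j<n. H (x j)))"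
  unfolding integral_kernel_sq_cdiff(2)[OF H] cvariance_lin_stat[OF H] distrib_left
  by (intro has_bochner_integral_add has_bochner_integral_kernel_form[OF borel_measurable_Re_Im_bounded(1,2)[OF H]]
      has_bochner_integral_kernel_form[OF borel_measurable_Re_Im_bounded(3,4)[OF H]])

lemma cvariance_lin_stat_mono:
  assumes F: "F \<in> borel_measurable borel" "\<And>t. cmod (F t) \<le> C"
    and G: "G \<in> borel_measurable borel" "\<And>t. cmod (G t) \<le> D"
    and diff: "\<And>s t. (cmod (F s - F t))^2 \<le> c * (cmod (G s - G t))^2"
  shows "cvariance (det_ensemble \<mu> \<psi> n) (\<lambda>x. \<Sum>j<n. F (x j))
           \<le> c * cvariance (det_ensemble \<mu> \<psi> n) (\<lambda>x. \<Sum>j<n. G (x j))"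
proof -
  define IF where "IF s = (\<integral>t. (cmod (F s - F t))^2 * (ope_kernel s t)^2 \<partial>\<mu>)" for s
  define IG where "IG s = (\<integral>t. (cmod (G s - G t))^2 * (ope_kernel s t)^2 \<partial>\<mu>)" for s
  have "IF s \<le> (\<integral>t. c * ((cmod (G s - G t))^2 * (ope_kernel s t)^2) \<partial>\<mu>)" for s
    unfolding IF_def
  proof (rule integral_mono)
    show "integrable \<mu> (\<lambda>t. (cmod (F s - F t))^2 * (ope_kernel s t)^2)"
      by (rule integral_kernel_sq_cdiff(1)[OF F])
    show "integrable \<mu> (\<lambda>t. c * ((cmod (G s - G t))^2 * (ope_kernel s t)^2))"
      using integral_kernel_sq_cdiff(1)[OF G] by (rule integrable_mult_right)
    show "(cmod (F s - F t))^2 * (ope_kernel s t)^2 \<le> c * ((cmod (G s - G t))^2 * (ope_kernel s t)^2)" for t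
      using mult_right_mono[OF diff zero_le_power2, of s t "ope_kernel s t"] by (simp add: mult.assoc)
  qed
  then have pointwise: "IF s \<le> c * IG s" for s by (simp add: IG_def)
  have "2 * cvariance (det_ensemble \<mu> \<psi> n) (\<lambda>x. \<Sum>j<n. F (x j)) = integral\<^sup>L \<mu> IF"
    using has_bochner_integral_kernel_cform[OF F] by (simp add: IF_def[abs_def] has_bochner_integral_iff)
  also have "\<dots> \<le> (\<integral>s. c * IG s \<partial>\<mu>)"
    using has_bochner_integral_kernel_cform[OF F] has_bochner_integral_kernel_cform[OF G] pointwise
    by (intro integral_mono) (auto simp: IF_def[abs_def] IG_def[abs_def] has_bochner_integral_iff)
  also have "\<dots> = c * (2 * cvariance (det_ensemble \<mu> \<psi> n) (\<lambda>x. \<Sum>j<n. G (x j)))"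
    using has_bochner_integral_kernel_cform[OF G] by (simp add: IG_def[abs_def] has_bochner_integral_iff)
  finally show ?thesis by simp
qed

end

section \<open>The OPE and the weighted Lipschitz space\<close>

lemma (in moment_measure) cvariance_OPE_lin_stat_mono:
  assumes F: "F \<in> borel_measurable borel" "\<And>t. cmod (F t) \<le> C"
    and G: "G \<in> borel_measurable borel" "\<And>t. cmod (G t) \<le> D"
    and diff: "\<And>s t. (cmod (F s - F t))^2 \<le> c * (cmod (G s - G t))^2"
  shows "cvariance (OPE \<mu> n) (\<lambda>x. \<Sum>j<n. F (x j)) \<le> c * cvariance (OPE \<mu> n) (\<lambda>x. \<Sum>j<n. G (x j))"
proof (cases "\<forall>i<n. orth_norm i > 0")
  case True
  interpret orthonormal_polys \<mu> orthonormal_poly n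
    by unfold_locales (simp add: True gram_orthonormal_poly)
  show ?thesis
    using cvariance_lin_stat_mono[OF F G diff] OPE_eq_det_ensemble True by simp
next
  case False
  \<comment> \<open>the normalising constant vanishes, so by the junk value x / 0 = 0 the OPE is the zero measure\<close>
  then obtain i where "i < n" "\<not> orth_norm i > 0" by blast
  then have "ope_partition \<mu> n = 0"
    using orth_norm_nonneg[of i] by (auto simp: ope_partition_eq intro!: prod_zero bexI[of _ i])
  then have "OPE \<mu> n = null_measure (ope_base \<mu> n)"
    unfolding OPE_def null_measure_eq_density by simp
  then show ?thesis by (simp add: cvariance_def integral_null_measure)
qed

lemma Lw_quot_le:
  assumes f: "f \<in> Lw" and xy: "x \<noteq> y"
  shows "sqrt (1 + x^2) * sqrt (1 + y^2) * \<bar>(f x - f y) / (x - y)\<bar> \<le> Lw_norm f"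
proof -
  have "sqrt (1 + x^2) * sqrt (1 + y^2) * \<bar>(f x - f y) / (x - y)\<bar> \<in> Lw_quot_set f"
    unfolding Lw_quot_set_def using xy by blast
  moreover have "bdd_above (Lw_quot_set f)" using f by (simp add: Lw_def)
  ultimately show ?thesis unfolding Lw_norm_def by (rule cSup_upper)
qed

lemma Lw_norm_nonneg:
  assumes "f \<in> Lw" shows "Lw_norm f \<ge> 0"
proof -
  have "sqrt 2 * \<bar>f 1 - f 0\<bar> \<le> Lw_norm f" using Lw_quot_le[OF assms, of 0 1] by simp
  moreover have "0 \<le> sqrt 2 * \<bar>f 1 - f 0\<bar>" by simp
  ultimately show ?thesis by linarith
qed

lemma Lw_diff_sq_le:
  assumes f: "f \<in> Lw"
  shows "(f x - f y)^2 \<le> (Lw_norm f)^2 * ((x - y)^2 / ((1 + x^2) * (1 + y^2)))"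
proof (cases "x = y")
  case False
  define q where "q = sqrt (1 + x^2) * sqrt (1 + y^2)"
  have q: "q > 0" "q^2 = (1 + x^2) * (1 + y^2)"
    unfolding q_def by (simp_all add: add_pos_nonneg power_mult_distrib)
  have "q * \<bar>f x - f y\<bar> \<le> Lw_norm f * \<bar>x - y\<bar>"
    using Lw_quot_le[OF f False] False by (simp add: q_def abs_divide field_simps)
  then have "(q * \<bar>f x - f y\<bar>)^2 \<le> (Lw_norm f * \<bar>x - y\<bar>)^2"
    by (rule power_mono) (use q in simp)
  then have "(f x - f y)^2 * q^2 \<le> (Lw_norm f)^2 * (x - y)^2"
    by (simp add: power_mult_distrib mult.commute)
  then have "(f x - f y)^2 \<le> (Lw_norm f)^2 * (x - y)^2 / q^2"
    using q(1) by (simp add: pos_le_divide_eq)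
  then show ?thesis
    using q(2) by simp
qed simp

lemma Lw_abs_diff_le:
  assumes f: "f \<in> Lw" and weight: "(x - y)^2 / ((1 + x^2) * (1 + y^2)) \<le> B^2"
  shows "\<bar>f x - f y\<bar> \<le> Lw_norm f * \<bar>B\<bar>"
proof -
  have "(f x - f y)^2 \<le> (Lw_norm f)^2 * B^2"
    using Lw_diff_sq_le[OF f, of x y] weight by (meson order_trans mult_left_mono zero_le_power2)
  then have "\<bar>f x - f y\<bar>^2 \<le> (Lw_norm f * \<bar>B\<bar>)^2"
    by (simp add: power_mult_distrib)
  then show ?thesis by (rule power2_le_imp_le) (simp add: Lw_norm_nonneg[OF f])
qed

text \<open>The functions of \<open>Lw\<close> vanish at -\<infinity> and oscillate by at most 2 \<parallel>f\<parallel>,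
  since (x - y)^2 \<le> 4 (1 + x^2) (1 + y^2); hence they are bounded.\<close>
lemma Lw_bounded:
  assumes f: "f \<in> Lw"
  shows "\<bar>f x\<bar> \<le> 2 * Lw_norm f + 1"
proof -
  have weight: "(x - y)^2 / ((1 + x^2) * (1 + y^2)) \<le> 2^2" for y
  proof -
    have "4 * ((1 + x^2) * (1 + y^2)) - (x - y)^2 = 4 + 2*x^2 + 2*y^2 + (x + y)^2 + 4*(x*y)^2"
      by (simp add: power2_eq_square algebra_simps)
    moreover have "0 \<le> 4 + 2*x^2 + 2*y^2 + (x + y)^2 + 4*(x*y)^2" by simp
    ultimately have "(x - y)^2 \<le> 4 * ((1 + x^2) * (1 + y^2))" by linarith
    then show ?thesis by (simp add: divide_le_eq add_pos_nonneg)
  qed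
  have osc: "\<bar>f x - f y\<bar> \<le> 2 * Lw_norm f" for y
    using Lw_abs_diff_le[OF f weight[of y]] by (simp add: mult.commute)
  have "(f \<longlongrightarrow> 0) at_bot" using f by (simp add: Lw_def)
  then have "eventually (\<lambda>y. dist (f y) 0 < 1) at_bot" by (rule tendstoD) simp
  then obtain y where "\<bar>f y\<bar> < 1" by (auto simp: eventually_at_bot_linorder dist_real_def)
  with osc[of y] show ?thesis by linarith
qed

lemma Lw_continuous: "f \<in> Lw \<Longrightarrow> continuous_on UNIV f"
proof (rule lipschitz_on_continuous_on)
  assume f: "f \<in> Lw"
  have "(x - y)^2 / ((1 + x^2) * (1 + y^2)) \<le> \<bar>x - y\<bar>^2" for x y :: real
  proof -
    have "1 * 1 \<le> (1 + x^2) * (1 + y^2)" by (intro mult_mono) auto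
    then show ?thesis
      by (simp add: divide_le_eq) (metis mult_left_mono mult.right_neutral zero_le_power2)
  qed
  then have "\<bar>f x - f y\<bar> \<le> Lw_norm f * \<bar>x - y\<bar>" for x y
    using Lw_abs_diff_le[OF f] by fastforce
  then show "(Lw_norm f)-lipschitz_on UNIV f"
    by (intro lipschitz_onI) (auto simp: dist_real_def Lw_norm_nonneg[OF f])
qed

lemma cmod_inverse_diff_i:
  "(cmod (inverse (complex_of_real a - \<i>) - inverse (complex_of_real b - \<i>)))^2
     = (a - b)^2 / ((1 + a^2) * (1 + b^2))"
proof -
  have "inverse (complex_of_real a - \<i>) - inverse (complex_of_real b - \<i>)
      = (complex_of_real b - complex_of_real a) / ((complex_of_real a - \<i>) * (complex_of_real b - \<i>))"
    by (simp add: field_simps complex_eq_iff)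
  moreover have "(cmod (complex_of_real a - \<i>))^2 = 1 + a^2" "(cmod (complex_of_real b - \<i>))^2 = 1 + b^2"
    by (simp_all add: cmod_power2)
  moreover have "(cmod (complex_of_real b - complex_of_real a))^2 = (a - b)^2"
    by (metis norm_of_real of_real_diff power2_abs power2_commute)
  ultimately show ?thesis
    by (simp add: norm_divide norm_mult power_divide power_mult_distrib power2_commute)
qed

lemma norm_inverse_of_real_minus_i_le: "cmod (inverse (complex_of_real r - \<i>)) \<le> 1"
proof -
  have "1 \<le> cmod (complex_of_real r - \<i>)" using abs_Im_le_cmod[of "complex_of_real r - \<i>"] by simp
  then show ?thesis by (simp add: norm_inverse inverse_le_1_iff)
qed

theorem proposition5p1:
  fixes \<mu> :: "real measure" and x0 \<alpha> :: real and f :: "real \<Rightarrow> real" and n :: nat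
  assumes "sets \<mu> = sets borel"
    and "finite_moments \<mu>"
    and "0 < \<alpha>" and "\<alpha> < 1"
    and "f \<in> Lw"
  shows "cvariance (OPE \<mu> n) (lin_stat (\<lambda>x. complex_of_real (f x)) \<alpha> x0 n)
         \<le> (Lw_norm f)^2 * cvariance (OPE \<mu> n) (lin_stat (\<lambda>x. inverse (complex_of_real x - \<i>)) \<alpha> x0 n)"
proof -
  interpret moment_measure \<mu>
    using assms(1,2) by unfold_locales (simp_all add: finite_moments_def)
  define F where "F t = complex_of_real (f (real n powr \<alpha> * (t - x0)))" for t
  define G where "G t = inverse (complex_of_real (real n powr \<alpha> * (t - x0)) - \<i>)" for t
  have "f \<in> borel_measurable borel"
    using Lw_continuous[OF assms(5)] by (rule borel_measurable_continuous_onI)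
  then have F: "F \<in> borel_measurable borel" "\<And>t. cmod (F t) \<le> 2 * Lw_norm f + 1"
    using Lw_bounded[OF assms(5)] unfolding F_def by auto
  have G: "G \<in> borel_measurable borel" "\<And>t. cmod (G t) \<le> 1"
    unfolding G_def[abs_def] by (measurable, rule norm_inverse_of_real_minus_i_le)
  have "(cmod (F s - F t))^2 \<le> (Lw_norm f)^2 * (cmod (G s - G t))^2" for s t
    unfolding F_def G_def cmod_inverse_diff_i
    by (simp only: of_real_diff[symmetric] norm_of_real power2_abs) (rule Lw_diff_sq_le[OF assms(5)])
  then show ?thesis
    using cvariance_OPE_lin_stat_mono[OF F G] unfolding lin_stat_def F_def G_def by simp
qed

end
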